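(* Let $A,B,C$ be the observer canonical realization (described in the context) of a plant $b(s)/a(s)$ that is stable (i.e. $A$ is Hurwitz) and has positive DC gain. Then the first exit map $\psi_+(\xi;1)$ is defined for every $\xi\in\mathbb{R}^n$.
   Context: The plant transfer function is $\frac{b(s)}{a(s)}=\frac{b_{n-1}s^{n-1}+\dots+b_0}{s^n+a_{n-1}s^{n-1}+\dots+a_0}$ with real coefficients. Its observer canonical realization is: $A$ is the $n\times n$ matrix with $A_{i+1,i}=1$ for $i=1,\dots,n-1$, last column $(-a_0,\dots,-a_{n-1})^T$, other entries zero; $B=(b_0,\dots,b_{n-1})^T$; $C=(0,\dots,0,1)$. The DC gain is $b_0/a_0$. The first exit time is $\tau_+(\xi)=\inf\{t>0: Cx(t)<0\}$ where $\dot x=Ax-B$, $x(0)=\xi$; the first exit map is $\psi_+(\xi;1)=x(\tau_+(\xi))$, defined at every point whose trajectory crosses the hyperplane $\{Cx=0\}$ in finite time. *)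

theory Defs
  imports "HOL-Analysis.Analysis"
begin

(* Vectors in R^n are functions nat => real (only indices 0..n-1 matter);
   n x n matrices are functions nat => nat => real.  Indices are 0-based:
   paper index k corresponds to k-1 here. *)

text \<open>Observer canonical realization of b(s)/a(s); a k = a_k, b k = b_k (k < n).\<close>
definition obs_A :: "nat \<Rightarrow> (nat \<Rightarrow> real) \<Rightarrow> nat \<Rightarrow> nat \<Rightarrow> real" where
  "obs_A n a i j = (if j = n - 1 then - a i else if i = Suc j then 1 else 0)"

definition obs_B :: "(nat \<Rightarrow> real) \<Rightarrow> nat \<Rightarrow> real" where
  "obs_B b i = b i"

definition obs_C :: "nat \<Rightarrow> (nat \<Rightarrow> real) \<Rightarrow> real" where
  "obs_C n x = x (n - 1)"

definition hurwitz :: "nat \<Rightarrow> (nat \<Rightarrow> nat \<Rightarrow> real) \<Rightarrow> bool" where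
  "hurwitz n M \<longleftrightarrow> (\<forall>(mu::complex) (v::nat \<Rightarrow> complex).
      (\<exists>i<n. v i \<noteq> 0) \<and> (\<forall>i<n. (\<Sum>j<n. complex_of_real (M i j) * v j) = mu * v i)
      \<longrightarrow> Re mu < 0)"

definition is_trajectory :: "nat \<Rightarrow> (nat \<Rightarrow> nat \<Rightarrow> real) \<Rightarrow> (nat \<Rightarrow> real) \<Rightarrow> (nat \<Rightarrow> real)
    \<Rightarrow> (nat \<Rightarrow> real \<Rightarrow> real) \<Rightarrow> bool" where
  "is_trajectory n A B \<xi> x \<longleftrightarrow> (\<forall>i<n. x i 0 = \<xi> i) \<and>
     (\<forall>i<n. \<forall>t\<ge>0. (x i has_real_derivative ((\<Sum>j<n. A i j * x j t) - B i)) (at t within {0..}))"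

text \<open>The first exit map psi_+(xi;1) is defined at xi iff the trajectory reaches {C x < 0}
  at some positive time, i.e. the first exit time inf {t>0. C x(t) < 0} is finite.\<close>
definition exit_map_defined :: "nat \<Rightarrow> (nat \<Rightarrow> nat \<Rightarrow> real) \<Rightarrow> (nat \<Rightarrow> real) \<Rightarrow> (nat \<Rightarrow> real) \<Rightarrow> bool" where
  "exit_map_defined n A B \<xi> \<longleftrightarrow>
     (\<forall>x. is_trajectory n A B \<xi> x \<longrightarrow> {t. t > 0 \<and> obs_C n (\<lambda>i. x i t) < 0} \<noteq> {})"

end

(* Suppose the output y = x_(n-1) of a trajectory stayed nonnegative for all t > 0.  The
   observer form reads x_0' = -a_0 y - b_0 and x_i' = x_(i-1) - a_i y - b_i, so once all a_i are
   nonnegative and b_0 > 0, the state x_0 decreases at a linear rate, and inductively each x_i is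
   driven to -\<infinity> by x_(i-1); in the end y itself tends to -\<infinity>, a contradiction.
   The a_i are the lower coefficients of the characteristic polynomial of A, whose roots are
   eigenvalues of A, and they are nonnegative by Stodola's condition: a real polynomial whose
   roots all lie in the open left half-plane is a positive multiple of a product of the factors
   s - r (r < 0) and s^2 - 2 Re z s + |z|^2 (Re z < 0).
   With a_0 > 0, the positive DC gain b_0 / a_0 gives b_0 > 0. *)

theory Submission
  imports Defs "HOL-Computational_Algebra.Fundamental_Theorem_Algebra"
begin

definition hurwitz_poly :: "real poly \<Rightarrow> bool" where
  "hurwitz_poly p \<longleftrightarrow> (\<forall>z. poly (map_poly complex_of_real p) z = 0 \<longrightarrow> Re z < 0)"

lemma map_poly_of_real_add:
  "map_poly of_real (p + q) = (map_poly of_real p + map_poly of_real q :: 'a::real_algebra_1 poly)"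
  by (rule poly_eqI) (simp add: coeff_map_poly)

lemma map_poly_of_real_mult:
  "map_poly of_real (p * q) =
    (map_poly of_real p * map_poly of_real q :: 'a::{real_algebra_1,comm_ring_1} poly)"
  by (rule poly_eqI) (simp add: coeff_map_poly coeff_mult of_real_sum)

lemma poly_map_poly_of_real:
  "poly (map_poly of_real p) (of_real x) = (of_real (poly p x) :: 'a::{real_algebra_1,comm_ring_1})"
  by (induction p) (simp_all add: map_poly_pCons)

lemma coeff_mult_nonneg:
  fixes p q :: "'a::linordered_comm_semiring_strict poly"
  assumes "\<forall>i. coeff p i \<ge> 0" "\<forall>i. coeff q i \<ge> 0"
  shows "coeff (p * q) k \<ge> 0"
  unfolding coeff_mult using assms by (intro sum_nonneg mult_nonneg_nonneg) auto

lemma hurwitz_poly_mult_right: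
  assumes "hurwitz_poly (p * q)"
  shows "hurwitz_poly q"
  using assms by (simp add: hurwitz_poly_def map_poly_of_real_mult)

lemma quadratic_dvd_of_nonreal_root:
  fixes p :: "real poly"
  assumes root: "poly (map_poly of_real p) z = 0" and nonreal: "Im z \<noteq> 0"
  shows "[:(cmod z)\<^sup>2, -2 * Re z, 1:] dvd p"
proof -
  define d :: "real poly" where "d = [:(cmod z)\<^sup>2, -2 * Re z, 1:]"
  define r where "r = p mod d"
  have "d \<noteq> 0" "degree d = 2" by (simp_all add: d_def)
  then have deg_r: "degree r \<le> 1"
    using degree_mod_less[of d p] by (cases "r = 0") (auto simp: r_def)
  have "poly (map_poly of_real d) z = 0"
    by (simp add: d_def map_poly_pCons complex_eq_iff cmod_def power2_eq_square algebra_simps)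
  then have "poly (map_poly of_real r) z = 0"
    using root div_mult_mod_eq[of p d]
    by (metis r_def add_0 map_poly_of_real_add map_poly_of_real_mult mult_zero_right poly_add poly_mult)
  moreover have r_linear: "r = [:coeff r 0, coeff r 1:]"
    using deg_r by (intro poly_eqI) (auto simp: coeff_pCons coeff_eq_0 split: nat.split)
  moreover have "poly (map_poly of_real [:c\<^sub>0, c\<^sub>1:]) z = of_real c\<^sub>0 + of_real c\<^sub>1 * z"
    for c\<^sub>0 c\<^sub>1 :: real
    by (simp add: map_poly_pCons)
  ultimately have "of_real (coeff r 0) + of_real (coeff r 1) * z = 0"
    by metis
  then have "r = 0"
    using nonreal r_linear by (auto simp: complex_eq_iff)
  then show ?thesis
    by (simp add: d_def r_def mod_eq_0_iff_dvd)
qed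

lemma hurwitz_poly_nonneg_monic_factor:
  fixes p :: "real poly"
  assumes "hurwitz_poly p" and "degree p > 0"
  obtains d where "d dvd p" "degree d > 0" "lead_coeff d = 1" "\<forall>i. coeff d i \<ge> 0"
proof -
  have "\<not> constant (poly (map_poly complex_of_real p))"
    using assms(2) by (simp add: constant_degree degree_map_poly)
  then obtain z where root: "poly (map_poly complex_of_real p) z = 0"
    using fundamental_theorem_of_algebra by blast
  then have "Re z < 0"
    using assms(1) by (simp add: hurwitz_poly_def)
  show thesis
  proof (cases "Im z = 0")
    case True
    then have "z = of_real (Re z)"
      by (simp add: complex_eq_iff)
    then have "poly p (Re z) = 0"
      using root poly_map_poly_of_real[where 'a=complex, of p "Re z"] by simp
    then have "[:- Re z, 1:] dvd p"
      by (simp add: poly_eq_0_iff_dvd)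
    then show thesis
      by (rule that) (use \<open>Re z < 0\<close> in \<open>auto simp: coeff_pCons split: nat.split\<close>)
  next
    case False
    with root have "[:(cmod z)\<^sup>2, -2 * Re z, 1:] dvd p"
      by (rule quadratic_dvd_of_nonreal_root)
    then show thesis
      by (rule that) (use \<open>Re z < 0\<close> in \<open>auto simp: coeff_pCons split: nat.split\<close>)
  qed
qed

lemma hurwitz_poly_coeff_nonneg:
  fixes p :: "real poly"
  assumes "hurwitz_poly p" and "lead_coeff p > 0"
  shows "coeff p k \<ge> 0"
  using assms
proof (induction "degree p" arbitrary: p k rule: less_induct)
  case less
  show ?case
  proof (cases "degree p = 0")
    case True
    then show ?thesis
      using less.prems(2) by (cases k) (auto simp: coeff_eq_0)
  next
    case False
    then obtain d where "d dvd p" "degree d > 0" "lead_coeff d = 1" "\<forall>i. coeff d i \<ge> 0"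
      using hurwitz_poly_nonneg_monic_factor less.prems(1) by blast
    then obtain q where p: "p = d * q"
      by blast
    with less.prems(2) have "q \<noteq> 0" "d \<noteq> 0"
      by auto
    have "lead_coeff q = lead_coeff p"
      using \<open>lead_coeff d = 1\<close> by (simp add: p lead_coeff_mult)
    moreover have "degree q < degree p"
      using \<open>degree d > 0\<close> \<open>d \<noteq> 0\<close> \<open>q \<noteq> 0\<close> by (simp add: p degree_mult_eq)
    moreover have "hurwitz_poly q"
      using less.prems(1) p hurwitz_poly_mult_right by blast
    ultimately have "\<forall>i. coeff q i \<ge> 0"
      using less.hyps less.prems(2) by metis
    with \<open>\<forall>i. coeff d i \<ge> 0\<close> show ?thesis
      unfolding p by (rule coeff_mult_nonneg)
  qed
qed

definition obs_char_poly :: "nat \<Rightarrow> (nat \<Rightarrow> real) \<Rightarrow> real poly" where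
  "obs_char_poly n a = monom 1 n + (\<Sum>i<n. monom (a i) i)"

lemma coeff_obs_char_poly:
  "coeff (obs_char_poly n a) k = (if k = n then 1 else if k < n then a k else 0)"
  by (auto simp: obs_char_poly_def coeff_sum coeff_monom lessThan_def)

lemma degree_obs_char_poly: "degree (obs_char_poly n a) = n"
  by (intro antisym degree_le le_degree) (auto simp: coeff_obs_char_poly)

lemma obs_A_mult_vector:
  fixes w :: "nat \<Rightarrow> 'a::real_algebra_1"
  assumes "i < n"
  shows "(\<Sum>j<n. of_real (obs_A n a i j) * w j) =
    (if i = 0 then 0 else w (i - 1)) - of_real (a i) * w (n - 1)"
proof -
  have "(\<Sum>j<n. of_real (obs_A n a i j) * w j)
      = (\<Sum>j<n. if i \<noteq> 0 \<and> j = i - 1 then w j else 0)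
        - (\<Sum>j<n. if j = n - 1 then of_real (a i) * w j else 0)"
    unfolding sum_subtractf[symmetric] using assms by (intro sum.cong) (auto simp: obs_A_def)
  also have "\<dots> = (if i = 0 then 0 else w (i - 1)) - of_real (a i) * w (n - 1)"
    using assms by (auto simp: sum.delta')
  finally show ?thesis .
qed

lemma hurwitz_obs_A_imp_hurwitz_poly:
  assumes "n \<ge> 1" and "hurwitz n (obs_A n a)"
  shows "hurwitz_poly (obs_char_poly n a)"
  unfolding hurwitz_poly_def
proof (intro allI impI)
  fix z :: complex
  assume root: "poly (map_poly of_real (obs_char_poly n a)) z = 0"
  define c where "c k = complex_of_real (coeff (obs_char_poly n a) k)" for k
  define h where "h j = (\<Sum>k\<in>{j..n}. c k * z ^ (k - j))" for j
  \<comment> \<open>The Horner tails h 1, ..., h n of the characteristic polynomial at z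
    form an eigenvector for z.\<close>
  have h_step: "h j = c j + z * h (Suc j)" if "j < n" for j
  proof -
    have "h j = c j + (\<Sum>k\<in>{Suc j..n}. c k * z ^ (k - j))"
      using that by (simp add: h_def sum.atLeast_Suc_atMost)
    also have "(\<Sum>k\<in>{Suc j..n}. c k * z ^ (k - j)) = z * h (Suc j)"
      unfolding h_def sum_distrib_left
      by (intro sum.cong refl) (simp add: Suc_diff_Suc flip: power_Suc)
    finally show ?thesis .
  qed
  have "h 0 = 0"
    using root by (simp add: h_def c_def poly_altdef degree_map_poly degree_obs_char_poly
        coeff_map_poly atLeast0AtMost)
  have "h n = 1"
    by (simp add: h_def c_def coeff_obs_char_poly)
  define v where "v i = h (Suc i)" for i
  have "v (n - 1) = 1"
    using \<open>h n = 1\<close> \<open>n \<ge> 1\<close> by (simp add: v_def)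
  have v_pred: "(if i = 0 then 0 else v (i - 1)) = h i" for i
    using \<open>h 0 = 0\<close> by (cases i) (simp_all add: v_def)
  have "(\<Sum>j<n. of_real (obs_A n a i j) * v j) = z * v i" if "i < n" for i
  proof -
    have "(\<Sum>j<n. of_real (obs_A n a i j) * v j) = h i - c i"
      using obs_A_mult_vector[OF that, where w = v] v_pred \<open>v (n - 1) = 1\<close> that
      by (simp add: c_def coeff_obs_char_poly)
    also have "\<dots> = z * v i"
      using h_step[OF that] by (simp add: v_def)
    finally show ?thesis .
  qed
  moreover have "\<exists>i<n. v i \<noteq> 0"
    using \<open>v (n - 1) = 1\<close> \<open>n \<ge> 1\<close> by (intro exI[of _ "n - 1"]) auto
  ultimately show "Re z < 0"
    using assms(2) unfolding hurwitz_def by blast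
qed

lemma hurwitz_obs_A_coeff_nonneg:
  assumes "n \<ge> 1" and "hurwitz n (obs_A n a)" and "i < n"
  shows "a i \<ge> 0"
proof -
  have "lead_coeff (obs_char_poly n a) > 0"
    by (simp add: degree_obs_char_poly coeff_obs_char_poly)
  with hurwitz_obs_A_imp_hurwitz_poly[OF assms(1,2)]
  have "coeff (obs_char_poly n a) i \<ge> 0"
    by (rule hurwitz_poly_coeff_nonneg)
  with \<open>i < n\<close> show ?thesis
    by (simp add: coeff_obs_char_poly)
qed

lemma filterlim_at_bot_of_deriv_le:
  fixes f f' :: "real \<Rightarrow> real"
  assumes deriv: "\<And>t. t > 0 \<Longrightarrow> (f has_real_derivative f' t) (at t within {0..})"
    and "c > 0" and "eventually (\<lambda>t. f' t \<le> -c) at_top"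
  shows "filterlim f at_bot at_top"
proof -
  obtain T\<^sub>0 where T\<^sub>0: "\<And>t. t \<ge> T\<^sub>0 \<Longrightarrow> f' t \<le> -c"
    using assms(3) by (auto simp: eventually_at_top_linorder)
  define T where "T = max T\<^sub>0 1"
  have "T > 0" and f'_le: "\<And>t. t \<ge> T \<Longrightarrow> f' t \<le> -c"
    using T\<^sub>0 by (auto simp: T_def)
  have linear_bound: "f t \<le> f T - c * (t - T)" if "t \<ge> T" for t
  proof -
    have "f t + c * t \<le> f T + c * T"
    proof (rule DERIV_nonpos_imp_nonincreasing[OF that])
      fix s assume "T \<le> s"
      with \<open>T > 0\<close> have "s > 0"
        by simp
      then have "(f has_real_derivative f' s) (at s within {0<..})"
        by (intro DERIV_subset[OF deriv]) auto
      moreover have "at s within {0<..} = at s"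
        using \<open>s > 0\<close> by (intro at_within_open) auto
      ultimately have "(f has_real_derivative f' s) (at s)"
        by simp
      then show "\<exists>y. ((\<lambda>s. f s + c * s) has_real_derivative y) (at s) \<and> y \<le> 0"
        using f'_le[OF \<open>T \<le> s\<close>]
        by (intro exI[of _ "f' s + c"]) (auto intro!: derivative_eq_intros)
    qed
    then show ?thesis
      by (simp add: algebra_simps)
  qed
  show ?thesis
    unfolding filterlim_at_bot
  proof
    fix Z
    show "eventually (\<lambda>t. f t \<le> Z) at_top"
      using eventually_ge_at_top[of "max T (T + (f T - Z) / c)"]
    proof (rule eventually_mono)
      fix t assume "max T (T + (f T - Z) / c) \<le> t"
      then have "t \<ge> T" and "f T - Z \<le> c * (t - T)"
        using \<open>c > 0\<close> by (auto simp: field_simps)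
      then show "f t \<le> Z"
        using linear_bound[of t] by simp
    qed
  qed
qed

lemma obs_trajectory_deriv:
  assumes "is_trajectory n (obs_A n a) (obs_B b) \<xi> x" and "i < n" and "t \<ge> 0"
  shows "(x i has_real_derivative (if i = 0 then 0 else x (i - 1) t) - a i * x (n - 1) t - b i)
           (at t within {0..})"
proof -
  have "(x i has_real_derivative (\<Sum>j<n. obs_A n a i j * x j t) - b i) (at t within {0..})"
    using assms by (simp add: is_trajectory_def obs_B_def)
  then show ?thesis
    using obs_A_mult_vector[OF \<open>i < n\<close>, where w = "\<lambda>j. x j t" and a = a and 'a = real]
    by simp
qed

lemma obs_trajectory_tendsto_at_bot:
  assumes traj: "is_trajectory n (obs_A n a) (obs_B b) \<xi> x"
    and a_nonneg: "\<And>i. i < n \<Longrightarrow> a i \<ge> 0" and "b 0 > 0"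
    and output_nonneg: "\<And>t. t > 0 \<Longrightarrow> x (n - 1) t \<ge> 0"
    and "i < n"
  shows "filterlim (x i) at_bot at_top"
proof -
  have feedback_nonneg: "eventually (\<lambda>t. a i * x (n - 1) t \<ge> 0) at_top" if "i < n" for i
    using eventually_gt_at_top[of 0]
    by eventually_elim (intro mult_nonneg_nonneg a_nonneg[OF that] output_nonneg)
  show ?thesis
    using \<open>i < n\<close>
  proof (induction i)
    case 0
    have "eventually (\<lambda>t. - a 0 * x (n - 1) t - b 0 \<le> - b 0) at_top"
      using feedback_nonneg[OF 0] by eventually_elim simp
    with 0 \<open>b 0 > 0\<close> show ?case
      by (intro filterlim_at_bot_of_deriv_le) (auto intro: obs_trajectory_deriv[OF traj])
  next
    case (Suc i)
    then have "eventually (\<lambda>t. x i t \<le> b (Suc i) - 1) at_top"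
      by (simp add: filterlim_at_bot)
    then have decay: "eventually (\<lambda>t. x i t - a (Suc i) * x (n - 1) t - b (Suc i) \<le> -1) at_top"
      using feedback_nonneg[OF Suc.prems] by eventually_elim simp
    have "(x (Suc i) has_real_derivative x i t - a (Suc i) * x (n - 1) t - b (Suc i))
        (at t within {0..})" if "t > 0" for t
      using obs_trajectory_deriv[OF traj Suc.prems, of t] that by simp
    from filterlim_at_bot_of_deriv_le[OF this zero_less_one decay] show ?case .
  qed
qed

theorem mainTheorem2:
  fixes n :: nat and a b :: "nat \<Rightarrow> real"
  assumes "n \<ge> 1"
    and "hurwitz n (obs_A n a)"
    and "b 0 / a 0 > 0"
  shows "\<forall>\<xi>::nat \<Rightarrow> real. exit_map_defined n (obs_A n a) (obs_B b) \<xi>"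
proof (intro allI, unfold exit_map_defined_def, intro allI impI notI)
  fix \<xi> x
  assume traj: "is_trajectory n (obs_A n a) (obs_B b) \<xi> x"
    and never_exits: "{t. t > 0 \<and> obs_C n (\<lambda>i. x i t) < 0} = {}"
  have a_nonneg: "a i \<ge> 0" if "i < n" for i
    using hurwitz_obs_A_coeff_nonneg[OF assms(1,2) that] .
  then have "a 0 \<ge> 0"
    using assms(1) by simp
  with assms(3) have "b 0 > 0"
    by (auto simp: zero_less_divide_iff)
  have output_nonneg: "x (n - 1) t \<ge> 0" if "t > 0" for t
    using never_exits that by (auto simp: obs_C_def)
  with traj a_nonneg \<open>b 0 > 0\<close> have "filterlim (x (n - 1)) at_bot at_top"
    using assms(1) by (intro obs_trajectory_tendsto_at_bot) auto
  then have "eventually (\<lambda>t. x (n - 1) t < 0) at_top"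
    by (simp add: filterlim_at_bot_dense)
  then have "eventually (\<lambda>_. False) (at_top :: real filter)"
    using eventually_gt_at_top[of 0] by eventually_elim (use output_nonneg in force)
  then show False
    by simp
qed

end
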